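(* Let $\mathcal{C}$ be a fusion category and let $G(\mathcal{C})$ be the group of isomorphism classes of invertible simple objects. Suppose that $|G(\mathcal{C})|$ is a power of a prime $p$ and that $\gcd(|\mathrm{Irr}_\alpha(\mathcal{C})|, p) = 1$ for some $\alpha > 1$. Then there exists $X \in \mathrm{Irr}_\alpha(\mathcal{C})$ such that $G[X] = G(\mathcal{C})$.
   Context: $\mathrm{Irr}_\alpha(\mathcal{C})$ denotes the set of isomorphism classes of simple objects of $\mathcal{C}$ of Frobenius–Perron dimension $\alpha$. The group $G(\mathcal{C})$ acts on the set of isomorphism classes of simple objects by left tensor product, and $G[X]$ denotes the stabilizer of $X$ under this action (i.e. $\{g : g\otimes X\cong X\}$). *)

theory Defs
  imports Complex_Main "HOL-Computational_Algebra.Primes"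
begin

text \<open>A fusion category is modelled through its Grothendieck (fusion) ring data:
  S = set of isomorphism classes of simple objects, one = unit object,
  N X Y Z = multiplicity of the simple Z in X \<otimes> Y, dual X = X^*.\<close>

definition fusion_ring :: "'a set \<Rightarrow> 'a \<Rightarrow> ('a \<Rightarrow> 'a \<Rightarrow> 'a \<Rightarrow> nat) \<Rightarrow> ('a \<Rightarrow> 'a) \<Rightarrow> bool" where
  "fusion_ring S one N dual \<longleftrightarrow>
     finite S \<and> one \<in> S \<and>
     (\<forall>x\<in>S. dual x \<in> S \<and> dual (dual x) = x) \<and>
     (\<forall>x\<in>S. \<forall>z\<in>S. N one x z = (if z = x then 1 else 0) \<and> N x one z = (if z = x then 1 else 0)) \<and>
     (\<forall>x\<in>S. \<forall>y\<in>S. \<forall>z\<in>S. \<forall>w\<in>S.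
         (\<Sum>u\<in>S. N x y u * N u z w) = (\<Sum>v\<in>S. N y z v * N x v w)) \<and>
     (\<forall>x\<in>S. \<forall>y\<in>S. N x y one = (if y = dual x then 1 else 0)) \<and>
     (\<forall>x\<in>S. \<forall>y\<in>S. \<forall>z\<in>S. N x y (dual z) = N y z (dual x))"

text \<open>Real eigenvalues of the matrix of left multiplication by x (entry (Z,Y) = N x Y Z).\<close>
definition fusion_eigenvalue :: "'a set \<Rightarrow> ('a \<Rightarrow> 'a \<Rightarrow> 'a \<Rightarrow> nat) \<Rightarrow> 'a \<Rightarrow> real \<Rightarrow> bool" where
  "fusion_eigenvalue S N x r \<longleftrightarrow>
     (\<exists>v :: 'a \<Rightarrow> real. (\<exists>y\<in>S. v y \<noteq> 0) \<and>
        (\<forall>z\<in>S. (\<Sum>y\<in>S. real (N x y z) * v y) = r * v z))"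

definition FPdim :: "'a set \<Rightarrow> ('a \<Rightarrow> 'a \<Rightarrow> 'a \<Rightarrow> nat) \<Rightarrow> 'a \<Rightarrow> real" where
  "FPdim S N x = Max {r. r \<ge> 0 \<and> fusion_eigenvalue S N x r}"

definition Irr :: "'a set \<Rightarrow> ('a \<Rightarrow> 'a \<Rightarrow> 'a \<Rightarrow> nat) \<Rightarrow> real \<Rightarrow> 'a set" where
  "Irr S N \<alpha> = {x \<in> S. FPdim S N x = \<alpha>}"

text \<open>x \<otimes> y \<cong> z for simple z: the tensor product decomposes as exactly one copy of z.\<close>
definition tensor_iso :: "'a set \<Rightarrow> ('a \<Rightarrow> 'a \<Rightarrow> 'a \<Rightarrow> nat) \<Rightarrow> 'a \<Rightarrow> 'a \<Rightarrow> 'a \<Rightarrow> bool" where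
  "tensor_iso S N x y z \<longleftrightarrow> (\<forall>w\<in>S. N x y w = (if w = z then 1 else 0))"

definition Ginv :: "'a set \<Rightarrow> 'a \<Rightarrow> ('a \<Rightarrow> 'a \<Rightarrow> 'a \<Rightarrow> nat) \<Rightarrow> ('a \<Rightarrow> 'a) \<Rightarrow> 'a set" where
  "Ginv S one N dual = {g \<in> S. tensor_iso S N g (dual g) one}"

definition stab :: "'a set \<Rightarrow> 'a \<Rightarrow> ('a \<Rightarrow> 'a \<Rightarrow> 'a \<Rightarrow> nat) \<Rightarrow> ('a \<Rightarrow> 'a) \<Rightarrow> 'a \<Rightarrow> 'a set" where
  "stab S one N dual X = {g \<in> Ginv S one N dual. tensor_iso S N g X X}"

end

theory Submission
  imports
    Defs "Jordan_Normal_Form.Char_Poly" "HOL-Analysis.Function_Topology" "HOL-Algebra.Group_Action"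
begin

text \<open>Left tensoring with an invertible object g sends each simple object X to a simple object,
  so G(C) acts on the simple objects. The action preserves Frobenius--Perron dimensions: these are
  the eigenvalues of the left multiplication matrices on a common positive eigenvector (the
  Perron--Frobenius eigenvector of right multiplication by the regular element), hence
  multiplicative, and FPdim g = 1. So the p-group G(C) acts on Irr_\<alpha>(C); every orbit that is
  not a fixed point has size divisible by p, and as |Irr_\<alpha>(C)| is prime to p some X is fixed,
  i.e. G[X] = G(C).\<close>

section \<open>Perron--Frobenius theory for positive matrices\<close>

definition mat_vec :: "'a set \<Rightarrow> ('a \<Rightarrow> 'a \<Rightarrow> real) \<Rightarrow> ('a \<Rightarrow> real) \<Rightarrow> 'a \<Rightarrow> real" where
  "mat_vec S M v z = (\<Sum>y\<in>S. M z y * v y)"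

lemma mat_vec_mat_vec:
  "mat_vec S A (mat_vec S B v) z = mat_vec S (\<lambda>z y'. \<Sum>y\<in>S. A z y * B y y') v z"
proof -
  have "mat_vec S A (mat_vec S B v) z = (\<Sum>y\<in>S. \<Sum>y'\<in>S. A z y * B y y' * v y')"
    unfolding mat_vec_def by (simp add: sum_distrib_left mult.assoc)
  also have "\<dots> = (\<Sum>y'\<in>S. \<Sum>y\<in>S. A z y * B y y' * v y')" by (rule sum.swap)
  finally show ?thesis unfolding mat_vec_def by (simp add: sum_distrib_right)
qed

lemma mat_vec_diff:
  "mat_vec S M (\<lambda>y. v y - c * w y) z = mat_vec S M v z - c * mat_vec S M w z"
  unfolding mat_vec_def by (simp add: algebra_simps sum_subtractf sum_distrib_left)

lemma mat_vec_divide: "mat_vec S M (\<lambda>y. v y / s) z = mat_vec S M v z / s"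
  unfolding mat_vec_def by (simp add: sum_divide_distrib)

lemma mat_vec_mult: "mat_vec S M (\<lambda>y. c * v y) z = c * mat_vec S M v z"
  unfolding mat_vec_def by (simp add: sum_distrib_left mult.left_commute)

lemma mat_vec_cong:
  "(\<And>y. y \<in> S \<Longrightarrow> A z y = B z y) \<Longrightarrow> (\<And>y. y \<in> S \<Longrightarrow> v y = w y) \<Longrightarrow>
    mat_vec S A v z = mat_vec S B w z"
  unfolding mat_vec_def by simp

lemma mat_vec_restrict: "mat_vec S M (restrict v S) z = mat_vec S M v z"
  unfolding mat_vec_def by (rule sum.cong) auto

lemma mat_vec_pos:
  assumes "finite S" "z \<in> S" and pos: "\<And>z y. z \<in> S \<Longrightarrow> y \<in> S \<Longrightarrow> M z y > 0"
    and nonneg: "\<forall>y\<in>S. v y \<ge> 0" and "\<exists>y\<in>S. v y > 0"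
  shows "mat_vec S M v z > 0"
proof -
  obtain y where y: "y \<in> S" "v y > 0" using assms(5) by blast
  have terms_nonneg: "\<forall>x\<in>S. M z x * v x \<ge> 0"
    using pos[OF assms(2)] nonneg by (meson less_imp_le mult_nonneg_nonneg)
  have "0 < M z y * v y" using pos[OF assms(2) y(1)] y(2) by simp
  also have "\<dots> \<le> mat_vec S M v z" unfolding mat_vec_def
    using member_le_sum[of y S "\<lambda>x. M z x * v x"] assms(1) y(1) terms_nonneg by simp
  finally show ?thesis .
qed

text \<open>With t the least ratio w/d, the vector w - t d is a nonnegative eigenvector with a zero
  entry; positivity of M forces it to vanish.\<close>
lemma positive_matrix_eigenvector_unique:
  assumes fin: "finite S" and ne: "S \<noteq> {}" and pos: "\<And>z y. z \<in> S \<Longrightarrow> y \<in> S \<Longrightarrow> M z y > 0"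
    and d_pos: "\<forall>z\<in>S. d z > 0" and d_eigen: "\<forall>z\<in>S. mat_vec S M d z = \<rho> * d z"
    and w_nonneg: "\<forall>z\<in>S. w z \<ge> 0" and w_eigen: "\<forall>z\<in>S. mat_vec S M w z = \<rho> * w z"
  shows "\<exists>t\<ge>0. \<forall>z\<in>S. w z = t * d z"
proof -
  define t where "t = Min ((\<lambda>z. w z / d z) ` S)"
  have "t \<in> (\<lambda>z. w z / d z) ` S" unfolding t_def using fin ne by (intro Min_in) auto
  then obtain z0 where z0: "z0 \<in> S" "t = w z0 / d z0" by auto
  have t_le: "t \<le> w z / d z" if "z \<in> S" for z unfolding t_def using fin that by (intro Min_le) auto
  define u where "u z = w z - t * d z" for z
  have u_nonneg: "u z \<ge> 0" if "z \<in> S" for z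
    using t_le[OF that] d_pos that by (auto simp: u_def pos_le_divide_eq mult.commute)
  have "u z0 = 0" using z0 d_pos by (auto simp: u_def)
  moreover have "mat_vec S M u z0 = \<rho> * u z0"
    unfolding u_def mat_vec_diff using d_eigen w_eigen z0(1) by (simp add: algebra_simps)
  ultimately have "(\<Sum>y\<in>S. M z0 y * u y) = 0" by (simp add: mat_vec_def)
  moreover have "\<forall>y\<in>S. M z0 y * u y \<ge> 0"
    using pos[OF z0(1)] u_nonneg by (meson less_imp_le mult_nonneg_nonneg)
  ultimately have "\<forall>y\<in>S. M z0 y * u y = 0"
    using sum_nonneg_eq_0_iff[OF fin, of "\<lambda>y. M z0 y * u y"] by simp
  then have "\<forall>y\<in>S. u y = 0" using pos z0(1) by (metis less_irrefl mult_eq_0_iff)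
  moreover have "t \<ge> 0" using z0 w_nonneg d_pos by auto
  ultimately show ?thesis by (auto simp: u_def intro!: exI[of _ t])
qed

definition std_simplex :: "'a set \<Rightarrow> ('a \<Rightarrow> real) set" where
  "std_simplex S = {u \<in> PiE S (\<lambda>_. {0..1}). sum u S = 1}"

lemma std_simplex_nonneg: "u \<in> std_simplex S \<Longrightarrow> \<forall>y\<in>S. u y \<ge> 0"
  by (auto simp: std_simplex_def)

lemma std_simplex_ex_pos:
  assumes "u \<in> std_simplex S"
  shows "\<exists>y\<in>S. u y > 0"
proof -
  have "sum u S \<noteq> 0" using assms by (simp add: std_simplex_def)
  then obtain y where "y \<in> S" "u y \<noteq> 0" by (rule sum.not_neutral_contains_not_neutral)
  then show ?thesis using std_simplex_nonneg[OF assms] by force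
qed

lemma compactin_std_simplex:
  assumes fin: "finite S"
  shows "compactin (product_topology (\<lambda>_. euclideanreal) S) (std_simplex S)"
proof -
  let ?X = "product_topology (\<lambda>_. euclideanreal) S"
  have "continuous_map ?X euclideanreal (\<lambda>u. sum u S)"
    using fin by (intro continuous_map_sum continuous_map_product_projection) auto
  then have "closedin ?X {u \<in> topspace ?X. sum u S \<in> {1}}"
    by (rule closedin_continuous_map_preimage) (simp add: closed_closedin[symmetric])
  moreover have "compactin ?X (PiE S (\<lambda>_. {0..1::real}))" by (subst compactin_PiE) auto
  moreover have "std_simplex S = PiE S (\<lambda>_. {0..1::real}) \<inter> {u \<in> topspace ?X. sum u S \<in> {1}}"
    by (auto simp: std_simplex_def PiE_def Pi_def)
  ultimately show ?thesis by (simp add: compact_Int_closedin)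
qed

definition collatz_wielandt :: "'a set \<Rightarrow> ('a \<Rightarrow> 'a \<Rightarrow> real) \<Rightarrow> ('a \<Rightarrow> real) \<Rightarrow> real" where
  "collatz_wielandt S M v = Min ((\<lambda>z. mat_vec S M v z / v z) ` S)"

lemma collatz_wielandt_le:
  assumes "finite S" "z \<in> S" "v z > 0"
  shows "collatz_wielandt S M v * v z \<le> mat_vec S M v z"
proof -
  have "collatz_wielandt S M v \<le> mat_vec S M v z / v z"
    unfolding collatz_wielandt_def using assms(1,2) by (intro Min_le) auto
  then show ?thesis using assms(3) by (simp add: pos_le_divide_eq)
qed

lemma collatz_wielandt_gt:
  assumes "finite S" "S \<noteq> {}" "\<forall>z\<in>S. v z > 0" "\<forall>z\<in>S. \<rho> * v z < mat_vec S M v z"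
  shows "\<rho> < collatz_wielandt S M v"
  unfolding collatz_wielandt_def using assms by (subst Min_gr_iff) (auto simp: pos_less_divide_eq)

lemma collatz_wielandt_divide:
  "collatz_wielandt S M (\<lambda>y. v y / s) = collatz_wielandt S M v" if "s > 0"
  unfolding collatz_wielandt_def mat_vec_divide using that by simp

lemma continuous_map_Min:
  assumes "finite A" "A \<noteq> {}" "\<And>a. a \<in> A \<Longrightarrow> continuous_map X euclideanreal (f a)"
  shows "continuous_map X euclideanreal (\<lambda>x. Min ((\<lambda>a. f a x) ` A))"
  using assms
proof (induction A rule: finite_ne_induct)
  case (insert a A)
  have "(\<lambda>x. Min ((\<lambda>b. f b x) ` insert a A)) = (\<lambda>x. min (f a x) (Min ((\<lambda>b. f b x) ` A)))"
    using insert by (auto simp: Min_insert)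
  then show ?case using insert by (auto intro!: continuous_map_real_min)
qed simp

lemma continuous_map_collatz_wielandt_mat_vec:
  assumes fin: "finite S" and ne: "S \<noteq> {}" and pos: "\<And>z y. z \<in> S \<Longrightarrow> y \<in> S \<Longrightarrow> M z y > 0"
  shows "continuous_map (subtopology (product_topology (\<lambda>_. euclideanreal) S) (std_simplex S))
           euclideanreal (\<lambda>u. collatz_wielandt S M (mat_vec S M u))"
  unfolding collatz_wielandt_def
proof (rule continuous_map_Min[OF fin ne])
  let ?X = "product_topology (\<lambda>_. euclideanreal) S"
  have cont: "continuous_map ?X euclideanreal (\<lambda>u. mat_vec S M u z)" for z
    unfolding mat_vec_def using fin
    by (intro continuous_map_sum continuous_map_real_mult_left continuous_map_product_projection)
      auto
  have cont2: "continuous_map ?X euclideanreal (\<lambda>u. mat_vec S M (mat_vec S M u) z)" for z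
    unfolding mat_vec_def[of S M "mat_vec S M _"] using fin
    by (intro continuous_map_sum continuous_map_real_mult_left cont) auto
  fix z assume z: "z \<in> S"
  show "continuous_map (subtopology ?X (std_simplex S)) euclideanreal
          (\<lambda>u. mat_vec S M (mat_vec S M u) z / mat_vec S M u z)"
  proof (intro continuous_map_real_divide continuous_map_from_subtopology cont cont2)
    fix u assume "u \<in> topspace (subtopology ?X (std_simplex S))"
    then have "u \<in> std_simplex S" by simp
    then show "mat_vec S M u z \<noteq> 0"
      using mat_vec_pos[where M = M, OF fin z pos] std_simplex_nonneg std_simplex_ex_pos by force
  qed
qed

lemma collatz_wielandt_attains_max:
  assumes fin: "finite S" and ne: "S \<noteq> {}" and pos: "\<And>z y. z \<in> S \<Longrightarrow> y \<in> S \<Longrightarrow> M z y > 0"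
  obtains u0 where "u0 \<in> std_simplex S"
    and "\<And>u. u \<in> std_simplex S \<Longrightarrow>
           collatz_wielandt S M (mat_vec S M u) \<le> collatz_wielandt S M (mat_vec S M u0)"
proof -
  let ?h = "\<lambda>u. collatz_wielandt S M (mat_vec S M u)"
  have "compactin euclideanreal (?h ` std_simplex S)"
    using compactin_std_simplex[OF fin]
    by (intro image_compactin[OF _ continuous_map_collatz_wielandt_mat_vec[OF assms]])
       (simp add: compactin_subtopology)
  moreover obtain z0 where z0: "z0 \<in> S" using ne by auto
  then have "restrict (\<lambda>y. if y = z0 then 1 else 0) S \<in> std_simplex S"
    using fin by (auto simp: std_simplex_def PiE_def Pi_def)
  ultimately obtain u0 where "u0 \<in> std_simplex S" "\<forall>u\<in>std_simplex S. ?h u \<le> ?h u0"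
    using compact_attains_sup[of "?h ` std_simplex S"] by auto
  then show ?thesis using that by blast
qed

text \<open>Perron's theorem, via the Collatz--Wielandt function: its maximum on the simplex is
  attained at a positive eigenvector.  The function is evaluated at M u rather than at u so that
  it is continuous on the whole simplex.\<close>
lemma positive_matrix_eigenvector_exists:
  assumes fin: "finite S" and ne: "S \<noteq> {}" and pos: "\<And>z y. z \<in> S \<Longrightarrow> y \<in> S \<Longrightarrow> M z y > 0"
  shows "\<exists>d \<rho>. (\<forall>z\<in>S. d z > 0) \<and> (\<forall>z\<in>S. mat_vec S M d z = \<rho> * d z)"
proof -
  let ?A = "mat_vec S M"
  obtain u0 where u0: "u0 \<in> std_simplex S"
    and u0_max: "\<And>u. u \<in> std_simplex S \<Longrightarrow> collatz_wielandt S M (?A u) \<le> collatz_wielandt S M (?A u0)"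
    using collatz_wielandt_attains_max[of S M, OF fin ne pos] by blast
  define \<rho> where "\<rho> = collatz_wielandt S M (?A u0)"
  define w where "w = ?A u0"
  have w_pos: "\<forall>z\<in>S. w z > 0"
    unfolding w_def using mat_vec_pos[where M = M, OF fin _ pos] std_simplex_nonneg[OF u0]
      std_simplex_ex_pos[OF u0] by blast
  have w_le: "\<rho> * w z \<le> ?A w z" if "z \<in> S" for z
    unfolding \<rho>_def w_def using collatz_wielandt_le[OF fin that] w_pos that by (simp add: w_def)
  have "\<forall>z\<in>S. ?A w z = \<rho> * w z"
  proof (rule ccontr)
    assume "\<not> ?thesis"
    then obtain z1 where z1: "z1 \<in> S" "?A w z1 \<noteq> \<rho> * w z1" by auto
    define y where "y z = ?A w z - \<rho> * w z" for z
    have "?A y z > 0" if "z \<in> S" for z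
      using mat_vec_pos[where M = M, OF fin that pos, of y] w_le z1 by (force simp: y_def)
    then have Aw_gt: "\<forall>z\<in>S. \<rho> * ?A w z < ?A (?A w) z" unfolding y_def mat_vec_diff by simp
    define s where "s = sum w S"
    have s_pos: "s > 0" unfolding s_def using fin ne w_pos by (intro sum_pos) auto
    have "restrict (\<lambda>z. w z / s) S \<in> std_simplex S"
      using w_pos s_pos fin unfolding std_simplex_def s_def
      by (auto simp: PiE_def Pi_def sum_divide_distrib[symmetric] less_imp_le
               intro: divide_le_eq_1_pos[THEN iffD2] member_le_sum)
    then have "collatz_wielandt S M (?A (restrict (\<lambda>z. w z / s) S)) \<le> \<rho>"
      using u0_max by (simp add: \<rho>_def)
    moreover have "?A (restrict (\<lambda>z. w z / s) S) = (\<lambda>z. ?A w z / s)"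
      by (rule ext) (simp add: mat_vec_restrict mat_vec_divide)
    moreover have "\<rho> < collatz_wielandt S M (?A w)"
      using collatz_wielandt_gt[OF fin ne _ Aw_gt] mat_vec_pos[where M = M, OF fin _ pos] w_pos
      by (auto intro: less_imp_le)
    ultimately show False using collatz_wielandt_divide[OF s_pos, where v = "?A w"] by simp
  qed
  then show ?thesis using w_pos by blast
qed

lemma eigenvalue_le_positive_eigenvalue:
  assumes fin: "finite S" and nonneg: "\<And>z y. z \<in> S \<Longrightarrow> y \<in> S \<Longrightarrow> M z y \<ge> 0"
    and d_pos: "\<forall>z\<in>S. d z > 0" and d_eigen: "\<forall>z\<in>S. mat_vec S M d z = \<rho> * d z"
    and v_ne: "\<exists>y\<in>S. v y \<noteq> 0" and v_eigen: "\<forall>z\<in>S. mat_vec S M v z = r * v z"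
  shows "\<bar>r\<bar> \<le> \<rho>"
proof -
  define \<mu> where "\<mu> = Max ((\<lambda>z. \<bar>v z\<bar> / d z) ` S)"
  have "\<mu> \<in> (\<lambda>z. \<bar>v z\<bar> / d z) ` S" unfolding \<mu>_def using fin v_ne by (intro Max_in) auto
  then obtain z1 where z1: "z1 \<in> S" "\<mu> = \<bar>v z1\<bar> / d z1" by blast
  have ratio_le: "\<bar>v z\<bar> / d z \<le> \<mu>" if "z \<in> S" for z
    unfolding \<mu>_def using fin that by (intro Max_ge) auto
  have v_le: "\<bar>v z\<bar> \<le> \<mu> * d z" if "z \<in> S" for z
    using ratio_le[OF that] d_pos that by (simp add: divide_le_eq)
  obtain y0 where y0: "y0 \<in> S" "v y0 \<noteq> 0" using v_ne by blast
  have "\<mu> > 0" using ratio_le[OF y0(1)] y0 d_pos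
    by (meson divide_pos_pos less_le_trans zero_less_abs_iff)
  moreover have d_z1: "d z1 > 0" using d_pos z1 by auto
  ultimately have v_z1: "\<bar>v z1\<bar> > 0" using z1 by (simp add: zero_less_divide_iff)
  have "\<bar>r\<bar> * \<bar>v z1\<bar> \<le> \<rho> * \<bar>v z1\<bar>"
  proof -
    have "\<bar>r\<bar> * \<bar>v z1\<bar> = \<bar>\<Sum>y\<in>S. M z1 y * v y\<bar>"
      using v_eigen z1(1) by (simp add: mat_vec_def abs_mult)
    also have "\<dots> \<le> (\<Sum>y\<in>S. M z1 y * \<bar>v y\<bar>)"
      using sum_abs[of "\<lambda>y. M z1 y * v y" S] nonneg z1(1) by (simp add: abs_mult)
    also have "\<dots> \<le> (\<Sum>y\<in>S. M z1 y * (\<mu> * d y))"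
      using v_le nonneg z1(1) by (intro sum_mono mult_left_mono) auto
    also have "\<dots> = \<mu> * mat_vec S M d z1" by (simp add: mat_vec_def sum_distrib_left mult_ac)
    also have "\<dots> = \<mu> * (\<rho> * d z1)" using d_eigen z1(1) by simp
    finally show ?thesis using z1 d_z1 by (simp add: mult.commute)
  qed
  then show ?thesis using v_z1 by (simp add: mult_le_cancel_right_pos)
qed

lemma finite_eigenvalues:
  assumes fin: "finite S"
  shows "finite {r. \<exists>v. (\<exists>y\<in>S. v y \<noteq> 0) \<and> (\<forall>z\<in>S. mat_vec S M v z = r * v z)}"
proof -
  obtain f where f: "bij_betw f {0..<card S} S" using ex_bij_betw_nat_finite[OF fin] by auto
  define n where "n = card S"
  define B where "B = mat n n (\<lambda>(i,j). M (f i) (f j))"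
  have B: "B \<in> carrier_mat n n" by (simp add: B_def)
  have "{r. \<exists>v. (\<exists>y\<in>S. v y \<noteq> 0) \<and> (\<forall>z\<in>S. mat_vec S M v z = r * v z)}
      \<subseteq> {r. poly (char_poly B) r = 0}"
  proof safe
    fix r v y assume y: "y \<in> S" "v y \<noteq> 0" and eigen: "\<forall>z\<in>S. mat_vec S M v z = r * v z"
    define u where "u = vec n (\<lambda>i. v (f i))"
    have "eigenvector B u r"
      unfolding eigenvector_def
    proof (intro conjI)
      show "u \<in> carrier_vec (dim_row B)" using B by (simp add: u_def)
      obtain i where i: "i < n" "f i = y" using f y unfolding bij_betw_def n_def by force
      show "u \<noteq> 0\<^sub>v (dim_row B)"
      proof
        assume "u = 0\<^sub>v (dim_row B)"
        then have "u $ i = 0" using i B by simp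
        then show False using i y by (simp add: u_def)
      qed
      show "B *\<^sub>v u = r \<cdot>\<^sub>v u"
      proof (rule eq_vecI)
        fix i assume "i < dim_vec (r \<cdot>\<^sub>v u)"
        then have i: "i < n" by (simp add: u_def)
        then have "f i \<in> S" using f by (auto simp: bij_betw_def n_def)
        then have "(\<Sum>y\<in>S. M (f i) y * v y) = r * v (f i)" using eigen by (simp add: mat_vec_def)
        moreover have "(\<Sum>j = 0..<n. M (f i) (f j) * v (f j)) = (\<Sum>y\<in>S. M (f i) y * v y)"
          using sum.reindex_bij_betw[OF f, of "\<lambda>y. M (f i) y * v y"] by (simp add: n_def)
        ultimately show "(B *\<^sub>v u) $ i = (r \<cdot>\<^sub>v u) $ i"
          using i by (simp add: B_def u_def scalar_prod_def)
      qed (simp add: B_def u_def)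
    qed
    then show "poly (char_poly B) r = 0"
      using eigenvalue_root_char_poly[OF B] unfolding eigenvalue_def by blast
  qed
  moreover have "char_poly B \<noteq> 0" using degree_monic_char_poly[OF B] by auto
  ultimately show ?thesis using poly_roots_finite finite_subset by blast
qed

section \<open>Fixed points of actions of p-groups\<close>

lemma (in group_action) prime_power_action_fixed_point:
  assumes p: "prime p" and order: "order G = p ^ k"
    and fin: "finite E" and coprime: "coprime (card E) p"
  shows "\<exists>x\<in>E. stabilizer G \<phi> x = carrier G"
proof (rule ccontr)
  assume no_fixed: "\<not> ?thesis"
  have fin_G: "finite (carrier G)"
    using order p unfolding order_def by (metis card.infinite power_eq_0_iff not_prime_0)
  have "p dvd card (orbit G \<phi> x)" if x: "x \<in> E" for x
  proof -
    have orbit_stab: "card (orbit G \<phi> x) * card (stabilizer G \<phi> x) = p ^ k"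
      using orbit_stabilizer_theorem[OF x] order by simp
    then obtain i where i: "card (orbit G \<phi> x) = p ^ i"
      using divides_primepow_nat[OF p] by (metis dvd_triv_left)
    have "card (stabilizer G \<phi> x) \<noteq> card (carrier G)"
      using card_subset_eq[OF fin_G stabilizer_subset] no_fixed x by blast
    then have "i \<noteq> 0" using orbit_stab i order by (cases "i = 0") (auto simp: order_def)
    then show ?thesis using i by simp
  qed
  then have "p dvd (\<Sum>orb\<in>orbits G E \<phi>. card orb)"
    by (intro dvd_sum) (auto simp: orbits_def)
  also have "(\<Sum>orb\<in>orbits G E \<phi>. card orb) = card E"
    using disjoint_sum[OF fin, of "\<lambda>_. 1::nat"] by simp
  finally have "is_unit p" using coprime by (meson coprime_common_divisor dvd_refl)
  then show False using p by simp
qed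

section \<open>Invertible objects of a fusion ring\<close>

locale fusion_rules =
  fixes S :: "'a set" and one :: 'a and N :: "'a \<Rightarrow> 'a \<Rightarrow> 'a \<Rightarrow> nat" and dual :: "'a \<Rightarrow> 'a"
  assumes fusion_ring: "fusion_ring S one N dual"
begin

lemma finite_S: "finite S"
  and one_in_S: "one \<in> S"
  and dual_in_S: "x \<in> S \<Longrightarrow> dual x \<in> S"
  and dual_dual: "x \<in> S \<Longrightarrow> dual (dual x) = x"
  and N_one_left: "x \<in> S \<Longrightarrow> z \<in> S \<Longrightarrow> N one x z = (if z = x then 1 else 0)"
  and N_assoc: "x \<in> S \<Longrightarrow> y \<in> S \<Longrightarrow> z \<in> S \<Longrightarrow> w \<in> S \<Longrightarrow>
      (\<Sum>u\<in>S. N x y u * N u z w) = (\<Sum>v\<in>S. N y z v * N x v w)"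
  and N_to_one: "x \<in> S \<Longrightarrow> y \<in> S \<Longrightarrow> N x y one = (if y = dual x then 1 else 0)"
  using fusion_ring unfolding fusion_ring_def by auto

lemma tensor_iso_one_left: "x \<in> S \<Longrightarrow> tensor_iso S N one x x"
  unfolding tensor_iso_def using N_one_left by simp

lemma tensor_iso_eq_if_N_nonzero:
  assumes "tensor_iso S N x y u" "w \<in> S" "N x y w \<noteq> 0"
  shows "w = u"
proof (rule ccontr)
  assume "w \<noteq> u"
  then have "N x y w = 0" using assms(1,2) by (simp add: tensor_iso_def)
  then show False using assms(3) by simp
qed

lemma tensor_iso_unique:
  assumes "tensor_iso S N x y u" "tensor_iso S N x y u'" "u \<in> S"
  shows "u = u'"
proof -
  have "N x y u = 1" using assms(1,3) by (simp add: tensor_iso_def)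
  then show ?thesis using tensor_iso_eq_if_N_nonzero[OF assms(2,3)] by simp
qed

lemma sum_tensor_iso:
  fixes f :: "'a \<Rightarrow> 'b :: comm_semiring_1"
  assumes "tensor_iso S N x y u" "u \<in> S"
  shows "(\<Sum>v\<in>S. of_nat (N x y v) * f v) = f u"
proof -
  have "(\<Sum>v\<in>S. of_nat (N x y v) * f v) = (\<Sum>v\<in>S. if v = u then f v else 0)"
    using assms(1) unfolding tensor_iso_def by (intro sum.cong) auto
  then show ?thesis using finite_S assms(2) by simp
qed

lemma tensor_nonzero:
  assumes x: "x \<in> S" and y: "y \<in> S"
  shows "(\<Sum>v\<in>S. N x y v) > 0"
proof -
  have "1 = N (dual x) x one * N one y y"
    using N_to_one[OF dual_in_S[OF x] x] dual_dual[OF x] N_one_left[OF y y] by simp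
  also have "\<dots> \<le> (\<Sum>u\<in>S. N (dual x) x u * N u y y)"
    using member_le_sum[of one S "\<lambda>u. N (dual x) x u * N u y y"] finite_S one_in_S by simp
  also have "\<dots> = (\<Sum>v\<in>S. N x y v * N (dual x) v y)" using N_assoc[OF dual_in_S[OF x] x y y] .
  finally have "(\<Sum>v\<in>S. N x y v * N (dual x) v y) \<noteq> 0" by linarith
  then obtain v where "v \<in> S" "N x y v \<noteq> 0" by (rule sum.not_neutral_contains_not_neutral) simp
  then show ?thesis using sum_pos2[OF finite_S, of v "N x y"] by simp
qed

lemma ex_N_right_pos:
  assumes y: "y \<in> S" and z: "z \<in> S"
  shows "\<exists>v\<in>S. N y v z > 0"
proof -
  have "1 = N y (dual y) one * N one z z"
    using N_to_one[OF y dual_in_S[OF y]] N_one_left[OF z z] by simp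
  also have "\<dots> \<le> (\<Sum>u\<in>S. N y (dual y) u * N u z z)"
    using member_le_sum[of one S "\<lambda>u. N y (dual y) u * N u z z"] finite_S one_in_S by simp
  also have "\<dots> = (\<Sum>v\<in>S. N (dual y) z v * N y v z)" using N_assoc[OF y dual_in_S[OF y] z z] .
  finally have "(\<Sum>v\<in>S. N (dual y) z v * N y v z) \<noteq> 0" by linarith
  then obtain v where "v \<in> S" "N (dual y) z v * N y v z \<noteq> 0"
    by (rule sum.not_neutral_contains_not_neutral)
  then show ?thesis by auto
qed

text \<open>If c \<otimes> (a \<otimes> b) is simple, then a \<otimes> b is simple: it is nonzero, and each of its
  summands v contributes at least one summand c \<otimes> v.\<close>
lemma tensor_iso_if_tensor_iso_left:
  assumes a: "a \<in> S" and b: "b \<in> S" and c: "c \<in> S"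
    and simple: "\<And>w. w \<in> S \<Longrightarrow> (\<Sum>v\<in>S. N a b v * N c v w) = (if w = x then 1 else 0)"
    and x: "x \<in> S"
  shows "\<exists>u\<in>S. tensor_iso S N a b u"
proof -
  have "(\<Sum>v\<in>S. N a b v) \<le> (\<Sum>v\<in>S. N a b v * (\<Sum>w\<in>S. N c v w))"
    using tensor_nonzero[OF c] by (intro sum_mono) (simp add: Suc_le_eq)
  also have "\<dots> = (\<Sum>v\<in>S. \<Sum>w\<in>S. N a b v * N c v w)" by (simp add: sum_distrib_left)
  also have "\<dots> = (\<Sum>w\<in>S. \<Sum>v\<in>S. N a b v * N c v w)" by (rule sum.swap)
  also have "\<dots> = 1" using simple x finite_S by simp
  finally have "(\<Sum>v\<in>S. N a b v) = 1" using tensor_nonzero[OF a b] by simp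
  then obtain u where "u \<in> S" "N a b u = 1" "\<forall>w\<in>S. u \<noteq> w \<longrightarrow> N a b w = 0"
    using sum_eq_1_iff[OF finite_S] by blast
  then show ?thesis unfolding tensor_iso_def by (intro bexI[of _ u]) auto
qed

lemma Ginv_iff: "g \<in> Ginv S one N dual \<longleftrightarrow> g \<in> S \<and> tensor_iso S N g (dual g) one"
  by (simp add: Ginv_def)

lemma Ginv_subset: "Ginv S one N dual \<subseteq> S"
  by (auto simp: Ginv_iff)

lemma dual_one: "dual one = one"
  using N_to_one[OF one_in_S one_in_S] N_one_left[OF one_in_S one_in_S] by (metis one_neq_zero)

lemma tensor_iso_one_imp_dual:
  assumes "x \<in> S" "y \<in> S" "tensor_iso S N x y one"
  shows "y = dual x"
proof -
  have "N x y one = 1" using assms(3) one_in_S by (simp add: tensor_iso_def)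
  then show ?thesis using N_to_one[OF assms(1,2)] by (cases "y = dual x") simp_all
qed

lemma tensor_iso_one_commute:
  assumes x: "x \<in> S" and y: "y \<in> S" and xy: "tensor_iso S N x y one"
  shows "tensor_iso S N y x one"
proof -
  have "(\<Sum>v\<in>S. N y x v * N x v w) = (if w = x then 1 else 0)" if w: "w \<in> S" for w
  proof -
    have "(\<Sum>v\<in>S. N y x v * N x v w) = (\<Sum>u\<in>S. N x y u * N u x w)"
      using N_assoc[OF x y x w] by simp
    also have "\<dots> = N one x w" using sum_tensor_iso[OF xy one_in_S, of "\<lambda>u. N u x w"] by simp
    finally show ?thesis using N_one_left[OF x w] by simp
  qed
  then obtain u where u: "u \<in> S" "tensor_iso S N y x u"
    using tensor_iso_if_tensor_iso_left[OF y x x _ x] by blast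
  have "N y x one = 1"
    using N_to_one[OF y x] tensor_iso_one_imp_dual[OF x y xy] dual_dual[OF x] by simp
  then have "one = u" using tensor_iso_eq_if_N_nonzero[OF u(2) one_in_S] by simp
  then show ?thesis using u by simp
qed

lemma one_in_Ginv: "one \<in> Ginv S one N dual"
  using one_in_S tensor_iso_one_left[OF one_in_S] by (simp add: Ginv_iff dual_one)

lemma tensor_iso_dual_left: "g \<in> Ginv S one N dual \<Longrightarrow> tensor_iso S N (dual g) g one"
  using tensor_iso_one_commute dual_in_S by (auto simp: Ginv_iff)

lemma dual_in_Ginv: "g \<in> Ginv S one N dual \<Longrightarrow> dual g \<in> Ginv S one N dual"
  using tensor_iso_dual_left dual_in_S dual_dual by (auto simp: Ginv_iff)

lemma Ginv_if_tensor_iso_one: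
  assumes x: "x \<in> S" and y: "y \<in> S" and yx: "tensor_iso S N y x one"
  shows "x \<in> Ginv S one N dual"
proof -
  have "dual x = y" using tensor_iso_one_imp_dual[OF y x yx] dual_dual[OF y] by simp
  then show ?thesis using tensor_iso_one_commute[OF y x yx] x by (simp add: Ginv_iff)
qed

definition act :: "'a \<Rightarrow> 'a \<Rightarrow> 'a" where
  "act g x = (THE u. u \<in> S \<and> tensor_iso S N g x u)"

lemma act:
  assumes g: "g \<in> Ginv S one N dual" and x: "x \<in> S"
  shows "act g x \<in> S" and "tensor_iso S N g x (act g x)"
proof -
  have gS: "g \<in> S" and dgS: "dual g \<in> S" using g dual_in_S by (auto simp: Ginv_iff)
  have "(\<Sum>v\<in>S. N g x v * N (dual g) v w) = (if w = x then 1 else 0)" if w: "w \<in> S" for w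
  proof -
    have "(\<Sum>v\<in>S. N g x v * N (dual g) v w) = (\<Sum>u\<in>S. N (dual g) g u * N u x w)"
      using N_assoc[OF dgS gS x w] by simp
    also have "\<dots> = N one x w"
      using sum_tensor_iso[OF tensor_iso_dual_left[OF g] one_in_S, of "\<lambda>u. N u x w"] by simp
    finally show ?thesis using N_one_left[OF x w] by simp
  qed
  then obtain u where u: "u \<in> S" "tensor_iso S N g x u"
    using tensor_iso_if_tensor_iso_left[OF gS x dgS _ x] by blast
  have "act g x = u" unfolding act_def
  proof (rule the_equality)
    show "v = u" if "v \<in> S \<and> tensor_iso S N g x v" for v
      using tensor_iso_unique[of g x v u] that u by simp
  qed (use u in simp)
  then show "act g x \<in> S" "tensor_iso S N g x (act g x)" using u by simp_all
qed

lemma act_eqI: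
  "g \<in> Ginv S one N dual \<Longrightarrow> x \<in> S \<Longrightarrow> tensor_iso S N g x u \<Longrightarrow> act g x = u"
  by (rule tensor_iso_unique[OF act(2) _ act(1)])

lemma N_act_left:
  assumes g: "g \<in> Ginv S one N dual" and x: "x \<in> S" and y: "y \<in> S" and z: "z \<in> S"
  shows "N (act g x) y z = (\<Sum>v\<in>S. N x y v * N g v z)"
proof -
  have "(\<Sum>v\<in>S. N x y v * N g v z) = (\<Sum>u\<in>S. N g x u * N u y z)"
    using N_assoc[OF _ x y z] g by (simp add: Ginv_iff)
  also have "\<dots> = N (act g x) y z"
    using sum_tensor_iso[OF act(2,1)[OF g x], of "\<lambda>u. N u y z"] by simp
  finally show ?thesis by simp
qed

lemma tensor_iso_act_act:
  assumes g: "g \<in> Ginv S one N dual" and h: "h \<in> Ginv S one N dual" and x: "x \<in> S"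
  shows "tensor_iso S N (act g h) x (act g (act h x))"
  unfolding tensor_iso_def
proof
  fix w assume w: "w \<in> S"
  have "N (act g h) x w = (\<Sum>v\<in>S. N h x v * N g v w)"
    using N_act_left[OF g _ x w] h by (simp add: Ginv_iff)
  also have "\<dots> = N g (act h x) w"
    using sum_tensor_iso[OF act(2,1)[OF h x], of "\<lambda>v. N g v w"] by simp
  finally show "N (act g h) x w = (if w = act g (act h x) then 1 else 0)"
    using act(2)[OF g act(1)[OF h x]] w by (simp add: tensor_iso_def)
qed

lemma act_one_left: "x \<in> S \<Longrightarrow> act one x = x"
  by (rule act_eqI[OF one_in_Ginv _ tensor_iso_one_left])

lemma act_dual_self: "g \<in> Ginv S one N dual \<Longrightarrow> act (dual g) g = one"
  using Ginv_subset by (blast intro: act_eqI[OF dual_in_Ginv _ tensor_iso_dual_left])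

lemma act_dual_act:
  assumes g: "g \<in> Ginv S one N dual" and x: "x \<in> S"
  shows "act (dual g) (act g x) = x"
proof -
  have "tensor_iso S N one x (act (dual g) (act g x))"
    using tensor_iso_act_act[OF dual_in_Ginv[OF g] g x] act_dual_self[OF g] by simp
  then show ?thesis
    by (rule tensor_iso_unique[OF tensor_iso_one_left[OF x] _ x, symmetric])
qed

lemma act_in_Ginv:
  assumes g: "g \<in> Ginv S one N dual" and h: "h \<in> Ginv S one N dual"
  shows "act g h \<in> Ginv S one N dual"
proof (rule Ginv_if_tensor_iso_one)
  show gh: "act g h \<in> S" using act(1)[OF g] h Ginv_subset by blast
  show "act (dual h) (dual g) \<in> S"
    using act(1)[OF dual_in_Ginv[OF h]] dual_in_Ginv[OF g] Ginv_subset by blast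
  have "tensor_iso S N (act (dual h) (dual g)) (act g h) (act (dual h) (act (dual g) (act g h)))"
    using tensor_iso_act_act[OF dual_in_Ginv[OF h] dual_in_Ginv[OF g] gh] .
  then show "tensor_iso S N (act (dual h) (dual g)) (act g h) one"
    using act_dual_act[OF g] act_dual_self[OF h] h Ginv_subset by auto
qed

lemma act_assoc:
  "g \<in> Ginv S one N dual \<Longrightarrow> h \<in> Ginv S one N dual \<Longrightarrow> x \<in> S \<Longrightarrow>
    act (act g h) x = act g (act h x)"
  by (rule act_eqI[OF act_in_Ginv _ tensor_iso_act_act])

definition inv_group :: "'a monoid" where
  "inv_group = \<lparr>carrier = Ginv S one N dual, mult = act, one = one\<rparr>"

lemma group_inv_group: "group inv_group"
proof (rule groupI)
  show "x \<otimes>\<^bsub>inv_group\<^esub> y \<in> carrier inv_group"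
    if "x \<in> carrier inv_group" "y \<in> carrier inv_group" for x y
    using that act_in_Ginv by (simp add: inv_group_def)
  show "x \<otimes>\<^bsub>inv_group\<^esub> y \<otimes>\<^bsub>inv_group\<^esub> z = x \<otimes>\<^bsub>inv_group\<^esub> (y \<otimes>\<^bsub>inv_group\<^esub> z)"
    if "x \<in> carrier inv_group" "y \<in> carrier inv_group" "z \<in> carrier inv_group" for x y z
    using that act_assoc Ginv_subset by (auto simp: inv_group_def)
  show "\<exists>y\<in>carrier inv_group. y \<otimes>\<^bsub>inv_group\<^esub> x = \<one>\<^bsub>inv_group\<^esub>"
    if "x \<in> carrier inv_group" for x
    using that dual_in_Ginv act_dual_self by (auto simp: inv_group_def)
qed (use one_in_Ginv act_one_left Ginv_subset in \<open>auto simp: inv_group_def\<close>)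

end

section \<open>Frobenius--Perron dimensions and the action on simple objects\<close>

context fusion_rules
begin

definition lmult :: "'a \<Rightarrow> 'a \<Rightarrow> 'a \<Rightarrow> real" where
  "lmult x z y = real (N x y z)"

text \<open>The matrix of right multiplication by the regular element, the sum of all simple objects.
  It is positive and commutes with every left multiplication, so its Perron--Frobenius
  eigenvector is a common eigenvector of all left multiplications.\<close>
definition regular :: "'a \<Rightarrow> 'a \<Rightarrow> real" where
  "regular z y = real (\<Sum>w\<in>S. N y w z)"

lemma fusion_eigenvalue_iff:
  "fusion_eigenvalue S N x r \<longleftrightarrow>
    (\<exists>v. (\<exists>y\<in>S. v y \<noteq> 0) \<and> (\<forall>z\<in>S. mat_vec S (lmult x) v z = r * v z))"
  by (simp add: fusion_eigenvalue_def mat_vec_def lmult_def)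

lemma regular_pos:
  assumes "z \<in> S" "y \<in> S"
  shows "regular z y > 0"
proof -
  obtain v where "v \<in> S" "N y v z > 0" using ex_N_right_pos[OF assms(2,1)] by blast
  then have "0 < (\<Sum>w\<in>S. N y w z)" using sum_pos2[OF finite_S, of v "\<lambda>w. N y w z"] by simp
  then show ?thesis by (simp add: regular_def del: of_nat_sum)
qed

lemma lmult_lmult:
  assumes "x \<in> S" "y \<in> S" "z \<in> S" "y' \<in> S"
  shows "(\<Sum>w\<in>S. lmult x z w * lmult y w y') = (\<Sum>u\<in>S. real (N x y u) * lmult u z y')"
proof -
  have "real (\<Sum>w\<in>S. N y y' w * N x w z) = real (\<Sum>u\<in>S. N x y u * N u y' z)"
    using N_assoc[OF assms(1,2,4,3)] by simp
  then show ?thesis unfolding lmult_def by (simp add: mult.commute)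
qed

lemma regular_lmult_commute_entries:
  assumes x: "x \<in> S" and z: "z \<in> S" and y': "y' \<in> S"
  shows "(\<Sum>y\<in>S. regular z y * lmult x y y') = (\<Sum>y\<in>S. lmult x z y * regular y y')"
proof -
  have "(\<Sum>y\<in>S. (\<Sum>w\<in>S. N y w z) * N x y' y) = (\<Sum>y\<in>S. \<Sum>w\<in>S. N y w z * N x y' y)"
    by (simp add: sum_distrib_right)
  also have "\<dots> = (\<Sum>w\<in>S. \<Sum>y\<in>S. N y w z * N x y' y)" by (rule sum.swap)
  also have "\<dots> = (\<Sum>w\<in>S. \<Sum>v\<in>S. N y' w v * N x v z)"
    using N_assoc[OF x y' _ z] by (simp add: mult.commute)
  also have "\<dots> = (\<Sum>v\<in>S. \<Sum>w\<in>S. N y' w v * N x v z)" by (rule sum.swap)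
  also have "\<dots> = (\<Sum>v\<in>S. N x v z * (\<Sum>w\<in>S. N y' w v))"
    by (simp add: sum_distrib_left mult.commute)
  finally have "real (\<Sum>y\<in>S. (\<Sum>w\<in>S. N y w z) * N x y' y) = real (\<Sum>v\<in>S. N x v z * (\<Sum>w\<in>S. N y' w v))"
    by simp
  then show ?thesis unfolding regular_def lmult_def by (simp only: of_nat_sum of_nat_mult)
qed

lemma lmult_mat_vec:
  assumes "x \<in> S" "y \<in> S" "z \<in> S"
  shows "mat_vec S (lmult x) (mat_vec S (lmult y) v) z =
    (\<Sum>u\<in>S. real (N x y u) * mat_vec S (lmult u) v z)"
proof -
  have "mat_vec S (lmult x) (mat_vec S (lmult y) v) z
      = mat_vec S (\<lambda>z y'. \<Sum>u\<in>S. real (N x y u) * lmult u z y') v z"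
    unfolding mat_vec_mat_vec using lmult_lmult[OF assms] by (intro mat_vec_cong) simp_all
  also have "\<dots> = (\<Sum>y'\<in>S. \<Sum>u\<in>S. real (N x y u) * (lmult u z y' * v y'))"
    unfolding mat_vec_def by (simp add: sum_distrib_right mult.assoc)
  also have "\<dots> = (\<Sum>u\<in>S. \<Sum>y'\<in>S. real (N x y u) * (lmult u z y' * v y'))" by (rule sum.swap)
  also have "\<dots> = (\<Sum>u\<in>S. real (N x y u) * mat_vec S (lmult u) v z)"
    unfolding mat_vec_def by (simp add: sum_distrib_left)
  finally show ?thesis .
qed

lemma regular_lmult_commute:
  assumes "x \<in> S" "z \<in> S"
  shows "mat_vec S regular (mat_vec S (lmult x) v) z = mat_vec S (lmult x) (mat_vec S regular v) z"
  unfolding mat_vec_mat_vec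
  using regular_lmult_commute_entries[OF assms] by (rule mat_vec_cong) simp_all

definition fp_vec :: "'a \<Rightarrow> real" where
  "fp_vec = (SOME d. (\<forall>z\<in>S. d z > 0) \<and> (\<exists>\<rho>. \<forall>z\<in>S. mat_vec S regular d z = \<rho> * d z))"

lemma fp_vec:
  shows "\<forall>z\<in>S. fp_vec z > 0"
    and "\<exists>\<rho>. \<forall>z\<in>S. mat_vec S regular fp_vec z = \<rho> * fp_vec z"
proof -
  have "\<exists>d. (\<forall>z\<in>S. d z > 0) \<and> (\<exists>\<rho>. \<forall>z\<in>S. mat_vec S regular d z = \<rho> * d z)"
    using positive_matrix_eigenvector_exists[where M = regular, OF finite_S _ regular_pos] one_in_S
    by blast
  from someI_ex[OF this] show "\<forall>z\<in>S. fp_vec z > 0"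
    and "\<exists>\<rho>. \<forall>z\<in>S. mat_vec S regular fp_vec z = \<rho> * fp_vec z"
    unfolding fp_vec_def by blast+
qed

lemma fp_vec_one: "fp_vec one \<noteq> 0"
  using fp_vec(1) one_in_S by force

definition fp_eigenvalue :: "'a \<Rightarrow> real" where
  "fp_eigenvalue x = mat_vec S (lmult x) fp_vec one / fp_vec one"

lemma lmult_fp_vec:
  assumes x: "x \<in> S" and z: "z \<in> S"
  shows "mat_vec S (lmult x) fp_vec z = fp_eigenvalue x * fp_vec z"
proof -
  obtain \<rho> where \<rho>: "\<forall>z\<in>S. mat_vec S regular fp_vec z = \<rho> * fp_vec z" using fp_vec(2) by blast
  have "mat_vec S regular (mat_vec S (lmult x) fp_vec) z = \<rho> * mat_vec S (lmult x) fp_vec z"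
    if "z \<in> S" for z
  proof -
    have "mat_vec S regular (mat_vec S (lmult x) fp_vec) z
        = mat_vec S (lmult x) (mat_vec S regular fp_vec) z"
      using regular_lmult_commute[OF x that] .
    also have "\<dots> = mat_vec S (lmult x) (\<lambda>y. \<rho> * fp_vec y) z"
      using \<rho> by (intro mat_vec_cong) simp_all
    finally show ?thesis by (simp add: mat_vec_mult)
  qed
  moreover have "mat_vec S (lmult x) fp_vec z \<ge> 0" for z
    unfolding mat_vec_def lmult_def using fp_vec(1) by (intro sum_nonneg) (auto intro: less_imp_le)
  ultimately obtain t where "\<forall>z\<in>S. mat_vec S (lmult x) fp_vec z = t * fp_vec z"
    using positive_matrix_eigenvector_unique[where M = regular,
        OF finite_S _ regular_pos fp_vec(1) \<rho>] one_in_S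
    by blast
  moreover from this have "fp_eigenvalue x = t"
    using fp_vec_one one_in_S by (simp add: fp_eigenvalue_def)
  ultimately show ?thesis using z by simp
qed

lemma fp_eigenvalue_nonneg: "x \<in> S \<Longrightarrow> fp_eigenvalue x \<ge> 0"
  unfolding fp_eigenvalue_def mat_vec_def lmult_def using fp_vec(1) one_in_S
  by (intro divide_nonneg_pos sum_nonneg) (auto intro: less_imp_le)

lemma FPdim_eq_fp_eigenvalue:
  assumes x: "x \<in> S"
  shows "FPdim S N x = fp_eigenvalue x"
proof -
  let ?E = "{r. \<exists>v. (\<exists>y\<in>S. v y \<noteq> 0) \<and> (\<forall>z\<in>S. mat_vec S (lmult x) v z = r * v z)}"
  have "finite {r \<in> ?E. r \<ge> 0}"
    using finite_eigenvalues[OF finite_S, of "lmult x"] by simp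
  moreover have "fp_eigenvalue x \<in> {r \<in> ?E. r \<ge> 0}"
    using fp_eigenvalue_nonneg[OF x] lmult_fp_vec[OF x] fp_vec_one one_in_S
    by (auto intro!: exI[of _ fp_vec])
  moreover have "r \<le> fp_eigenvalue x" if r_eigen: "r \<in> {r \<in> ?E. r \<ge> 0}" for r
  proof -
    obtain v where r_nonneg: "r \<ge> 0" and v_ne: "\<exists>y\<in>S. v y \<noteq> 0"
      and v_eigen: "\<forall>z\<in>S. mat_vec S (lmult x) v z = r * v z"
      using r_eigen by blast
    have "\<bar>r\<bar> \<le> fp_eigenvalue x"
      by (rule eigenvalue_le_positive_eigenvalue[OF finite_S _ fp_vec(1) _ v_ne v_eigen])
        (simp_all add: lmult_def lmult_fp_vec[OF x])
    then show ?thesis using r_nonneg by simp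
  qed
  ultimately show ?thesis
    unfolding FPdim_def fusion_eigenvalue_iff by (intro Max_eqI) (auto simp: conj_commute)
qed

lemma fp_eigenvalue_tensor:
  assumes x: "x \<in> S" and y: "y \<in> S"
  shows "fp_eigenvalue x * fp_eigenvalue y = (\<Sum>u\<in>S. real (N x y u) * fp_eigenvalue u)"
proof -
  have "fp_eigenvalue x * fp_eigenvalue y * fp_vec one
      = mat_vec S (lmult x) (mat_vec S (lmult y) fp_vec) one"
    using lmult_fp_vec[OF x] lmult_fp_vec[OF y] one_in_S
      mat_vec_mult[of S "lmult x" "fp_eigenvalue y" fp_vec]
    by (simp add: mat_vec_def)
  also have "\<dots> = (\<Sum>u\<in>S. real (N x y u) * fp_eigenvalue u) * fp_vec one"
    using lmult_mat_vec[OF x y one_in_S] lmult_fp_vec one_in_S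
    by (simp add: sum_distrib_right mult.assoc)
  finally show ?thesis using fp_vec_one by simp
qed

text \<open>Left multiplication by an invertible object permutes the simple objects, so its matrix
  has column sums 1.\<close>
lemma fp_eigenvalue_Ginv:
  assumes g: "g \<in> Ginv S one N dual"
  shows "fp_eigenvalue g = 1"
proof -
  have "(\<Sum>z\<in>S. real (N g y z)) = 1" if y: "y \<in> S" for y
    using sum_tensor_iso[OF act(2,1)[OF g y], of "\<lambda>_. 1 :: real"] by simp
  then have "(\<Sum>y\<in>S. (\<Sum>z\<in>S. real (N g y z)) * fp_vec y) = (\<Sum>y\<in>S. fp_vec y)" by simp
  moreover have "(\<Sum>z\<in>S. mat_vec S (lmult g) fp_vec z)
      = (\<Sum>y\<in>S. \<Sum>z\<in>S. real (N g y z) * fp_vec y)"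
    unfolding mat_vec_def lmult_def by (rule sum.swap)
  ultimately have "(\<Sum>z\<in>S. mat_vec S (lmult g) fp_vec z) = (\<Sum>y\<in>S. fp_vec y)"
    by (simp add: sum_distrib_right)
  moreover have "(\<Sum>z\<in>S. mat_vec S (lmult g) fp_vec z) = fp_eigenvalue g * (\<Sum>y\<in>S. fp_vec y)"
    using lmult_fp_vec g Ginv_subset by (auto simp: sum_distrib_left)
  moreover have "(\<Sum>y\<in>S. fp_vec y) > 0" using finite_S one_in_S fp_vec(1) by (intro sum_pos) auto
  ultimately show ?thesis by simp
qed

lemma FPdim_act:
  assumes g: "g \<in> Ginv S one N dual" and x: "x \<in> S"
  shows "FPdim S N (act g x) = FPdim S N x"
proof -
  have "fp_eigenvalue (act g x) = fp_eigenvalue g * fp_eigenvalue x"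
    using fp_eigenvalue_tensor[OF _ x] sum_tensor_iso[OF act(2,1)[OF g x], of fp_eigenvalue]
      g Ginv_subset by auto
  then show ?thesis using FPdim_eq_fp_eigenvalue act(1)[OF g x] x fp_eigenvalue_Ginv[OF g] by simp
qed

lemma act_in_Irr: "g \<in> Ginv S one N dual \<Longrightarrow> x \<in> Irr S N \<alpha> \<Longrightarrow> act g x \<in> Irr S N \<alpha>"
  unfolding Irr_def using act(1) FPdim_act by auto

lemma finite_Irr: "finite (Irr S N \<alpha>)"
  using finite_S by (rule finite_subset[rotated]) (auto simp: Irr_def)

lemma group_action_Irr: "group_action inv_group (Irr S N \<alpha>) (\<lambda>g. \<lambda>x\<in>Irr S N \<alpha>. act g x)"
  unfolding group_action_def group_hom_def group_hom_axioms_def hom_def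
proof (intro conjI group_inv_group group_BijGroup CollectI ballI)
  let ?I = "Irr S N \<alpha>"
  have bij: "(\<lambda>x\<in>?I. act g x) \<in> Bij ?I" if g: "g \<in> Ginv S one N dual" for g
    unfolding Bij_def
  proof (intro IntI CollectI)
    show "(\<lambda>x\<in>?I. act g x) \<in> extensional ?I" by simp
    have "act (dual g) (act g x) = x" "act g (act (dual g) x) = x" if "x \<in> ?I" for x
      using that act_dual_act[OF g] act_dual_act[OF dual_in_Ginv[OF g]] dual_dual g Ginv_subset
      by (auto simp: Irr_def)
    then show "bij_betw (\<lambda>x\<in>?I. act g x) ?I ?I"
      using act_in_Irr[OF g] act_in_Irr[OF dual_in_Ginv[OF g]]
      by (intro bij_betwI[where g = "\<lambda>x\<in>?I. act (dual g) x"]) auto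
  qed
  show "(\<lambda>g. \<lambda>x\<in>?I. act g x) \<in> carrier inv_group \<rightarrow> carrier (BijGroup ?I)"
    using bij by (auto simp: BijGroup_def inv_group_def)
  fix g h assume "g \<in> carrier inv_group" "h \<in> carrier inv_group"
  then show "(\<lambda>x\<in>?I. act (g \<otimes>\<^bsub>inv_group\<^esub> h) x) = (\<lambda>x\<in>?I. act g x) \<otimes>\<^bsub>BijGroup ?I\<^esub> (\<lambda>x\<in>?I. act h x)"
    using bij act_in_Irr act_assoc by (auto simp: BijGroup_def compose_def Irr_def inv_group_def)
qed

lemma stabilizer_Irr:
  assumes "X \<in> Irr S N \<alpha>"
  shows "stabilizer inv_group (\<lambda>g. \<lambda>x\<in>Irr S N \<alpha>. act g x) X = stab S one N dual X"
proof -
  have "X \<in> S" using assms by (simp add: Irr_def)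
  then have "tensor_iso S N g X X \<longleftrightarrow> act g X = X" if "g \<in> Ginv S one N dual" for g
    using act_eqI[OF that] act(2)[OF that] by metis
  then show ?thesis using assms unfolding stabilizer_def stab_def by (auto simp: inv_group_def)
qed

end

theorem lemma2p1:
  fixes S :: "'a set" and one :: 'a and N :: "'a \<Rightarrow> 'a \<Rightarrow> 'a \<Rightarrow> nat"
    and dual :: "'a \<Rightarrow> 'a" and p k :: nat and \<alpha> :: real
  assumes "fusion_ring S one N dual"
    and "prime p" and "card (Ginv S one N dual) = p ^ k"
    and "\<alpha> > 1"
    and "coprime (card (Irr S N \<alpha>)) p"
  shows "\<exists>X \<in> Irr S N \<alpha>. stab S one N dual X = Ginv S one N dual"
proof -
  interpret fusion_rules S one N dual by (rule fusion_rules.intro) fact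
  interpret group_action inv_group "Irr S N \<alpha>" "\<lambda>g. \<lambda>x\<in>Irr S N \<alpha>. act g x"
    by (rule group_action_Irr)
  have "order inv_group = p ^ k" using assms(3) by (simp add: order_def inv_group_def)
  then obtain X where "X \<in> Irr S N \<alpha>"
    and "stabilizer inv_group (\<lambda>g. \<lambda>x\<in>Irr S N \<alpha>. act g x) X = carrier inv_group"
    using prime_power_action_fixed_point[OF assms(2) _ finite_Irr assms(5)] by blast
  then show ?thesis using stabilizer_Irr by (auto simp: inv_group_def)
qed

end
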